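(* Let $\mathfrak M$ be a relational structure with domain $\Sigma$. For every $n\ge1$ and every relation $R\subseteq(\Sigma^* )^n$, $R$ is $MSO(\mathfrak M)$-definable if and only if $R$ is $\mathfrak M$-recognizable.
   Context: Let $\mathfrak L$ be a relational language and $\mathfrak M$ an $\mathfrak L$-structure with domain $\Sigma$ (finite or infinite). Let $\#\notin\Sigma$ and let $\mathfrak M_\#$ be the structure in the language $\mathfrak L_\#=\mathfrak L\cup\{P_\#\}$ with domain $\Sigma\cup\{\#\}$, every symbol of $\mathfrak L$ interpreted as in $\mathfrak M$ and $P_\#(x)$ holding iff $x=\#$. For $w=(w_1,\dots,w_n)\in(\Sigma^* )^n$, $\langle w\rangle$ denotes the word over $(\Sigma\cup\{\#\})^n$ of length $\max_i|w_i|$ obtained by padding each $w_i$ on the right with $\#$'s and reading them in parallel; $\pi_j(\langle w\rangle)$ is its $j$-th component and $u[i]$ the $i$-th letter of a word $u$ (starting at $0$). $\mathfrak M$-automata: an $\mathfrak M$-automaton with $n$ tapes is $(Q,n,E,I,T)$ with $Q$ a finite set of states, $I,T\subseteq Q$, and $E\subseteq Q\times\mathcal F_n\times Q$ a finite set of transitions, $\mathcal F_n$ the set of first-order $\mathfrak L_\#$-formulas with $n$ free variables; $w$ is accepted if there are states $q_0\in I,\dots,q_m\in T$ ($m=|\langle w\rangle|$) such that for each $i<m$ some $(q_i,\varphi,q_{i+1})\in E$ satisfies $\mathfrak M_\#\models\varphi(\pi_1(\langle w\rangle)[i],\dots,\pi_n(\langle w\rangle)[i])$. $R$ is $\mathfrak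 M$-recognizable if it is the set of tuples accepted by some $\mathfrak M$-automaton. $MSO(\mathfrak M)$-definability: to each first-order $\mathfrak L_\#$-formula $F$ with at least one free variable associate a unary predicate symbol $\alpha_F$; $MSO(\mathfrak L)$ is monadic second-order logic over the signature $\{<\}\cup\{\alpha_F\}$. $R\subseteq(\Sigma^* )^n$ is $MSO(\mathfrak M)$-definable if there is an $MSO(\mathfrak L)$-sentence $\psi$ such that $w\in R$ iff $\psi$ holds in the structure with domain $D=\{0,\dots,|\langle w\rangle|-1\}$, $<$ the natural order on $D$, and, for each $F$ with $n$ free variables, $\alpha_F(x)$ true iff $\mathfrak M_\#\models F(\pi_1(\langle w\rangle)[x],\dots,\pi_n(\langle w\rangle)[x])$. *)

theory Defs
  imports Main
begin

text \<open>An L-structure with domain Sigma is modelled by taking the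
domain to be the whole type 'a, and interpreting each symbol r as a set I r of
tuples (lists) of length ar r. The extended domain Sigma plus the fresh symbol
# is modelled by 'a option, where None plays the role of #.\<close>

definition is_structure :: "'r set \<Rightarrow> ('r \<Rightarrow> nat) \<Rightarrow> ('r \<Rightarrow> 'a list set) \<Rightarrow> bool" where
  "is_structure L ar I \<longleftrightarrow> (\<forall>r xs. xs \<in> I r \<longrightarrow> r \<in> L \<and> length xs = ar r)"

datatype 'r fo =
    FEq nat nat
  | FRel 'r "nat list"
  | FHash nat
  | FNeg "'r fo"
  | FConj "'r fo" "'r fo"
  | FEx nat "'r fo"

fun fo_wf :: "'r set \<Rightarrow> ('r \<Rightarrow> nat) \<Rightarrow> 'r fo \<Rightarrow> bool" where
  "fo_wf L ar (FEq x y) = True"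
| "fo_wf L ar (FRel r xs) = (r \<in> L \<and> length xs = ar r)"
| "fo_wf L ar (FHash x) = True"
| "fo_wf L ar (FNeg \<phi>) = fo_wf L ar \<phi>"
| "fo_wf L ar (FConj \<phi> \<psi>) = (fo_wf L ar \<phi> \<and> fo_wf L ar \<psi>)"
| "fo_wf L ar (FEx x \<phi>) = fo_wf L ar \<phi>"

fun fo_fv :: "'r fo \<Rightarrow> nat set" where
  "fo_fv (FEq x y) = {x, y}"
| "fo_fv (FRel r xs) = set xs"
| "fo_fv (FHash x) = {x}"
| "fo_fv (FNeg \<phi>) = fo_fv \<phi>"
| "fo_fv (FConj \<phi> \<psi>) = fo_fv \<phi> \<union> fo_fv \<psi>"
| "fo_fv (FEx x \<phi>) = fo_fv \<phi> - {x}"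

text \<open>Satisfaction in M_#: domain 'a option (None = #), symbols of L interpreted
as in M (tuples containing # are never related), P_# x iff x = #.\<close>

fun fo_sat :: "('r \<Rightarrow> 'a list set) \<Rightarrow> (nat \<Rightarrow> 'a option) \<Rightarrow> 'r fo \<Rightarrow> bool" where
  "fo_sat I v (FEq x y) = (v x = v y)"
| "fo_sat I v (FRel r xs) = ((\<forall>x\<in>set xs. v x \<noteq> None) \<and> map (the \<circ> v) xs \<in> I r)"
| "fo_sat I v (FHash x) = (v x = None)"
| "fo_sat I v (FNeg \<phi>) = (\<not> fo_sat I v \<phi>)"
| "fo_sat I v (FConj \<phi> \<psi>) = (fo_sat I v \<phi> \<and> fo_sat I v \<psi>)"
| "fo_sat I v (FEx x \<phi>) = (\<exists>a. fo_sat I (v(x := a)) \<phi>)"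

text \<open>F_n: formulas of L_# whose free variables are among x_1..x_n, where the
variable x_j is represented by the number j - 1.\<close>

definition fo_formula_n :: "'r set \<Rightarrow> ('r \<Rightarrow> nat) \<Rightarrow> nat \<Rightarrow> 'r fo \<Rightarrow> bool" where
  "fo_formula_n L ar n \<phi> \<longleftrightarrow> fo_wf L ar \<phi> \<and> fo_fv \<phi> \<subseteq> {..<n}"

text \<open>A tuple w in (Sigma^*)^n is a list of n words. padlen w = |<w>|, and
col w i is the i-th letter of <w> as a valuation: variable j gets
pi_(j+1)(<w>)[i], i.e. the i-th letter of the j-th word or # (None).\<close>

definition padlen :: "'a list list \<Rightarrow> nat" where
  "padlen w = foldr max (map length w) 0"

definition col :: "'a list list \<Rightarrow> nat \<Rightarrow> nat \<Rightarrow> 'a option" where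
  "col w i j = (if j < length w \<and> i < length (w ! j) then Some (w ! j ! i) else None)"

definition is_automaton ::
  "'r set \<Rightarrow> ('r \<Rightarrow> nat) \<Rightarrow> nat \<Rightarrow> nat set \<Rightarrow> (nat \<times> 'r fo \<times> nat) set \<Rightarrow> nat set \<Rightarrow> nat set \<Rightarrow> bool" where
  "is_automaton L ar n Q E I0 T \<longleftrightarrow>
     finite Q \<and> I0 \<subseteq> Q \<and> T \<subseteq> Q \<and> finite E \<and>
     E \<subseteq> Q \<times> {\<phi>. fo_formula_n L ar n \<phi>} \<times> Q"

definition aut_accepts ::
  "('r \<Rightarrow> 'a list set) \<Rightarrow> (nat \<times> 'r fo \<times> nat) set \<Rightarrow> nat set \<Rightarrow> nat set \<Rightarrow> 'a list list \<Rightarrow> bool" where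
  "aut_accepts I E I0 T w \<longleftrightarrow>
     (\<exists>qs :: nat \<Rightarrow> nat. qs 0 \<in> I0 \<and> qs (padlen w) \<in> T \<and>
        (\<forall>i < padlen w. \<exists>\<phi>. (qs i, \<phi>, qs (Suc i)) \<in> E \<and> fo_sat I (col w i) \<phi>))"

definition recognizable ::
  "'r set \<Rightarrow> ('r \<Rightarrow> nat) \<Rightarrow> ('r \<Rightarrow> 'a list set) \<Rightarrow> nat \<Rightarrow> 'a list list set \<Rightarrow> bool" where
  "recognizable L ar I n R \<longleftrightarrow>
     (\<exists>Q E I0 T. is_automaton L ar n Q E I0 T \<and>
        R = {w. length w = n \<and> aut_accepts I E I0 T w})"

datatype 'r mso =
    MLess nat nat
  | MEq nat nat
  | MAlpha "'r fo" nat
  | MMem nat nat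
  | MNeg "'r mso"
  | MConj "'r mso" "'r mso"
  | MEx1 nat "'r mso"
  | MEx2 nat "'r mso"

fun mso_fv1 :: "'r mso \<Rightarrow> nat set" where
  "mso_fv1 (MLess x y) = {x, y}"
| "mso_fv1 (MEq x y) = {x, y}"
| "mso_fv1 (MAlpha F x) = {x}"
| "mso_fv1 (MMem x X) = {x}"
| "mso_fv1 (MNeg \<psi>) = mso_fv1 \<psi>"
| "mso_fv1 (MConj \<psi> \<chi>) = mso_fv1 \<psi> \<union> mso_fv1 \<chi>"
| "mso_fv1 (MEx1 x \<psi>) = mso_fv1 \<psi> - {x}"
| "mso_fv1 (MEx2 X \<psi>) = mso_fv1 \<psi>"

fun mso_fv2 :: "'r mso \<Rightarrow> nat set" where
  "mso_fv2 (MLess x y) = {}"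
| "mso_fv2 (MEq x y) = {}"
| "mso_fv2 (MAlpha F x) = {}"
| "mso_fv2 (MMem x X) = {X}"
| "mso_fv2 (MNeg \<psi>) = mso_fv2 \<psi>"
| "mso_fv2 (MConj \<psi> \<chi>) = mso_fv2 \<psi> \<union> mso_fv2 \<chi>"
| "mso_fv2 (MEx1 x \<psi>) = mso_fv2 \<psi>"
| "mso_fv2 (MEx2 X \<psi>) = mso_fv2 \<psi> - {X}"

definition mso_sentence :: "'r mso \<Rightarrow> bool" where
  "mso_sentence \<psi> \<longleftrightarrow> mso_fv1 \<psi> = {} \<and> mso_fv2 \<psi> = {}"

fun mso_ok :: "'r set \<Rightarrow> ('r \<Rightarrow> nat) \<Rightarrow> nat \<Rightarrow> 'r mso \<Rightarrow> bool" where
  "mso_ok L ar n (MAlpha F x) = (fo_formula_n L ar n F \<and> fo_fv F \<noteq> {})"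
| "mso_ok L ar n (MNeg \<psi>) = mso_ok L ar n \<psi>"
| "mso_ok L ar n (MConj \<psi> \<chi>) = (mso_ok L ar n \<psi> \<and> mso_ok L ar n \<chi>)"
| "mso_ok L ar n (MEx1 x \<psi>) = mso_ok L ar n \<psi>"
| "mso_ok L ar n (MEx2 X \<psi>) = mso_ok L ar n \<psi>"
| "mso_ok L ar n _ = True"

fun mso_sat :: "('r \<Rightarrow> 'a list set) \<Rightarrow> 'a list list \<Rightarrow> (nat \<Rightarrow> nat) \<Rightarrow> (nat \<Rightarrow> nat set) \<Rightarrow> 'r mso \<Rightarrow> bool" where
  "mso_sat I w v1 v2 (MLess x y) = (v1 x < v1 y)"
| "mso_sat I w v1 v2 (MEq x y) = (v1 x = v1 y)"
| "mso_sat I w v1 v2 (MAlpha F x) = fo_sat I (col w (v1 x)) F"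
| "mso_sat I w v1 v2 (MMem x X) = (v1 x \<in> v2 X)"
| "mso_sat I w v1 v2 (MNeg \<psi>) = (\<not> mso_sat I w v1 v2 \<psi>)"
| "mso_sat I w v1 v2 (MConj \<psi> \<chi>) = (mso_sat I w v1 v2 \<psi> \<and> mso_sat I w v1 v2 \<chi>)"
| "mso_sat I w v1 v2 (MEx1 x \<psi>) = (\<exists>p < padlen w. mso_sat I w (v1(x := p)) v2 \<psi>)"
| "mso_sat I w v1 v2 (MEx2 X \<psi>) = (\<exists>S \<subseteq> {..<padlen w}. mso_sat I w v1 (v2(X := S)) \<psi>)"

definition mso_holds :: "('r \<Rightarrow> 'a list set) \<Rightarrow> 'a list list \<Rightarrow> 'r mso \<Rightarrow> bool" where
  "mso_holds I w \<psi> = mso_sat I w (\<lambda>_. 0) (\<lambda>_. {}) \<psi>"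

definition mso_definable ::
  "'r set \<Rightarrow> ('r \<Rightarrow> nat) \<Rightarrow> ('r \<Rightarrow> 'a list set) \<Rightarrow> nat \<Rightarrow> 'a list list set \<Rightarrow> bool" where
  "mso_definable L ar I n R \<longleftrightarrow>
     (\<exists>\<psi>. mso_ok L ar n \<psi> \<and> mso_sentence \<psi> \<and>
        (\<forall>w. length w = n \<longrightarrow> (w \<in> R \<longleftrightarrow> mso_holds I w \<psi>)))"

end

theory Submission
  imports Defs
begin

text \<open>
  Definable implies recognizable: annotate every letter with the first-order variables placed
  at its position and the second-order variables containing it. By induction on the formula,
  the annotated words satisfying it form a language with finitely many left quotients: atomic
  formulas give simple languages, negation and conjunction are Boolean operations, and
  quantifiers are letter-wise projections. For a sentence, the left quotients of its language
  of columns are the states of a deterministic automaton; as a column matters only through the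
  truth values of the finitely many formulas \<open>\<alpha>\<^sub>F\<close> occurring in the sentence, the
  transitions can be labelled by conjunctions of these formulas and their negations.

  Recognizable implies definable: existentially quantify, for every transition, the set of
  positions at which an accepting run uses it, and express in MSO that these sets describe
  such a run.
\<close>

section \<open>Left quotients\<close>

definition lquot :: "'b list \<Rightarrow> 'b list set \<Rightarrow> 'b list set" where
  "lquot u A = {v. u @ v \<in> A}"

definition finite_lquots :: "'b list set \<Rightarrow> bool" where
  "finite_lquots A \<longleftrightarrow> finite (range (\<lambda>u. lquot u A))"

lemma lquot_lquot: "lquot v (lquot u A) = lquot (u @ v) A"
  by (simp add: lquot_def)

lemma finite_lquotsI: "range (\<lambda>u. lquot u A) \<subseteq> S \<Longrightarrow> finite S \<Longrightarrow> finite_lquots A"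
  unfolding finite_lquots_def by (rule finite_subset)

lemma finite_lquots_UNIV: "finite_lquots UNIV"
  by (rule finite_lquotsI[of _ "{UNIV}"]) (auto simp: lquot_def)

lemma finite_lquots_Int:
  assumes "finite_lquots A" "finite_lquots B"
  shows "finite_lquots (A \<inter> B)"
proof (rule finite_lquotsI)
  show "range (\<lambda>u. lquot u (A \<inter> B)) \<subseteq> (\<lambda>(X, Y). X \<inter> Y) ` (range (\<lambda>u. lquot u A) \<times> range (\<lambda>u. lquot u B))"
    by (auto simp: lquot_def image_iff)
  show "finite ((\<lambda>(X, Y). X \<inter> Y) ` (range (\<lambda>u. lquot u A) \<times> range (\<lambda>u. lquot u B)))"
    using assms unfolding finite_lquots_def by simp
qed

lemma finite_lquots_Compl:
  assumes "finite_lquots A"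
  shows "finite_lquots (- A)"
proof -
  have "range (\<lambda>u. lquot u (- A)) = uminus ` range (\<lambda>u. lquot u A)"
    by (auto simp: lquot_def image_iff)
  with assms show ?thesis
    unfolding finite_lquots_def by simp
qed

lemma finite_lquots_Diff: "finite_lquots A \<Longrightarrow> finite_lquots B \<Longrightarrow> finite_lquots (A - B)"
  by (simp add: Diff_eq finite_lquots_Int finite_lquots_Compl)

lemma finite_lquots_INT:
  "finite V \<Longrightarrow> (\<And>x. x \<in> V \<Longrightarrow> finite_lquots (F x)) \<Longrightarrow> finite_lquots (\<Inter>x\<in>V. F x)"
  by (induction V rule: finite_induct) (auto intro: finite_lquots_UNIV finite_lquots_Int)

lemma finite_lquots_vimage_map:
  assumes "finite_lquots A"
  shows "finite_lquots {u. map g u \<in> A}"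
proof (rule finite_lquotsI)
  show "range (\<lambda>u. lquot u {u. map g u \<in> A}) \<subseteq> (\<lambda>X. {u. map g u \<in> X}) ` range (\<lambda>u. lquot u A)"
    by (auto simp: lquot_def)
  show "finite ((\<lambda>X. {u. map g u \<in> X}) ` range (\<lambda>u. lquot u A))"
    using assms unfolding finite_lquots_def by simp
qed

definition contains_letter :: "'b set \<Rightarrow> 'b list set" where
  "contains_letter C = {u. \<exists>l\<in>set u. l \<in> C}"

lemma finite_lquots_contains_letter: "finite_lquots (contains_letter C)"
  by (rule finite_lquotsI[of _ "{UNIV, contains_letter C}"]) (auto simp: lquot_def contains_letter_def)

definition conc :: "'b list set \<Rightarrow> 'b list set \<Rightarrow> 'b list set" where
  "conc A B = {u @ v | u v. u \<in> A \<and> v \<in> B}"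

lemma concI: "u \<in> A \<Longrightarrow> v \<in> B \<Longrightarrow> u @ v \<in> conc A B"
  by (auto simp: conc_def)

lemma lquot_conc:
  "lquot u (conc A B) = conc (lquot u A) B \<union> \<Union>{lquot u2 B | u1 u2. u = u1 @ u2 \<and> u1 \<in> A}"
  by (auto simp: lquot_def conc_def append_eq_append_conv2) blast+

lemma finite_lquots_conc:
  assumes "finite_lquots A" "finite_lquots B"
  shows "finite_lquots (conc A B)"
proof (rule finite_lquotsI)
  show "range (\<lambda>u. lquot u (conc A B))
    \<subseteq> (\<lambda>(X, S). conc X B \<union> \<Union>S) ` (range (\<lambda>u. lquot u A) \<times> Pow (range (\<lambda>u. lquot u B)))"
    unfolding lquot_conc by (auto simp: image_iff) blast
  show "finite ((\<lambda>(X, S). conc X B \<union> \<Union>S) ` (range (\<lambda>u. lquot u A) \<times> Pow (range (\<lambda>u. lquot u B))))"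
    using assms unfolding finite_lquots_def by simp
qed

definition rel_proj :: "('b \<Rightarrow> 'b \<Rightarrow> bool) \<Rightarrow> 'b list set \<Rightarrow> 'b list set" where
  "rel_proj R A = {u. \<exists>u'\<in>A. list_all2 R u u'}"

lemma lquot_rel_proj: "lquot u (rel_proj R A) = rel_proj R (\<Union>{lquot u' A | u'. list_all2 R u u'})"
proof (intro set_eqI iffI)
  fix v assume "v \<in> lquot u (rel_proj R A)"
  then obtain z where "z \<in> A" "list_all2 R (u @ v) z"
    by (auto simp: lquot_def rel_proj_def)
  then obtain us vs where "z = us @ vs" "list_all2 R u us" "list_all2 R v vs"
    unfolding list_all2_append1 by blast
  with \<open>z \<in> A\<close> show "v \<in> rel_proj R (\<Union>{lquot u' A | u'. list_all2 R u u'})"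
    unfolding rel_proj_def lquot_def by blast
next
  fix v assume "v \<in> rel_proj R (\<Union>{lquot u' A | u'. list_all2 R u u'})"
  then obtain us vs where "list_all2 R v vs" "us @ vs \<in> A" "list_all2 R u us"
    unfolding rel_proj_def lquot_def by blast
  then show "v \<in> lquot u (rel_proj R A)"
    unfolding lquot_def rel_proj_def by (blast intro: list_all2_appendI)
qed

lemma finite_lquots_rel_proj:
  assumes "finite_lquots A"
  shows "finite_lquots (rel_proj R A)"
proof (rule finite_lquotsI)
  show "range (\<lambda>u. lquot u (rel_proj R A)) \<subseteq> (\<lambda>S. rel_proj R (\<Union>S)) ` Pow (range (\<lambda>u. lquot u A))"
    unfolding lquot_rel_proj by blast
  show "finite ((\<lambda>S. rel_proj R (\<Union>S)) ` Pow (range (\<lambda>u. lquot u A)))"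
    using assms unfolding finite_lquots_def by simp
qed

section \<open>Annotated words and the languages of MSO formulas\<close>

text \<open>A letter together with the first-order variables marked at its position and the
  second-order variables whose value contains it.\<close>

type_synonym 'c ann = "'c \<times> nat set \<times> nat set"

definition marked :: "'c ann list \<Rightarrow> nat \<Rightarrow> nat \<Rightarrow> bool" where
  "marked u x i \<longleftrightarrow> i < length u \<and> x \<in> fst (snd (u ! i))"

definition mark_count :: "'c ann list \<Rightarrow> nat \<Rightarrow> nat" where
  "mark_count u x = card {i. marked u x i}"

definition pos :: "'c ann list \<Rightarrow> nat \<Rightarrow> nat" where
  "pos u x = (if \<exists>i. marked u x i then LEAST i. marked u x i else 0)"

definition pset :: "'c ann list \<Rightarrow> nat \<Rightarrow> nat set" where
  "pset u X = {i. i < length u \<and> X \<in> snd (snd (u ! i))}"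

definition letter :: "'c ann list \<Rightarrow> nat \<Rightarrow> 'c" where
  "letter u i = (if i < length u then fst (u ! i) else undefined)"

definition once_marked :: "nat set \<Rightarrow> 'c ann list set" where
  "once_marked V = {u. \<forall>x\<in>V. mark_count u x = 1}"

lemma mark_count_eq_length_filter: "mark_count u x = length (filter (\<lambda>l. x \<in> fst (snd l)) u)"
  unfolding mark_count_def marked_def by (simp add: length_filter_conv_card)

lemma mark_count_append: "mark_count (u @ v) x = mark_count u x + mark_count v x"
  by (simp add: mark_count_eq_length_filter)

lemma finite_lquots_once_marked_singleton: "finite_lquots (once_marked {x})"
proof (rule finite_lquotsI)
  show "range (\<lambda>u. lquot u (once_marked {x})) \<subseteq> (\<lambda>k. {v. k + mark_count v x = 1}) ` {..2}"
  proof (rule image_subsetI)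
    fix u :: "'c ann list"
    have "lquot u (once_marked {x}) = {v. min 2 (mark_count u x) + mark_count v x = 1}"
      by (auto simp: lquot_def once_marked_def mark_count_append)
    then show "lquot u (once_marked {x}) \<in> (\<lambda>k. {v. k + mark_count v x = 1}) ` {..2}"
      by (rule image_eqI) simp
  qed
qed simp

lemma once_marked_eq_INT: "once_marked V = (\<Inter>x\<in>V. once_marked {x})"
  by (auto simp: once_marked_def)

lemma finite_lquots_once_marked: "finite V \<Longrightarrow> finite_lquots (once_marked V)"
  unfolding once_marked_eq_INT[of V]
  by (simp add: finite_lquots_INT finite_lquots_once_marked_singleton)

lemma marked_iff_pos:
  assumes "mark_count u x = 1"
  shows "marked u x i \<longleftrightarrow> i = pos u x"
proof -
  obtain p where "{i. marked u x i} = {p}"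
    using assms unfolding mark_count_def by (rule card_1_singletonE)
  then have p: "marked u x i \<longleftrightarrow> i = p" for i
    by blast
  then have "pos u x = p"
    unfolding pos_def p by (simp add: Least_equality)
  with p show ?thesis by simp
qed

lemma pos_less_length: "mark_count u x = 1 \<Longrightarrow> pos u x < length u"
  using marked_iff_pos[of u x "pos u x"] by (simp add: marked_def)

fun mso_eval ::
  "('r fo \<Rightarrow> 'c \<Rightarrow> bool) \<Rightarrow> (nat \<Rightarrow> 'c) \<Rightarrow> nat \<Rightarrow> (nat \<Rightarrow> nat) \<Rightarrow> (nat \<Rightarrow> nat set) \<Rightarrow> 'r mso \<Rightarrow> bool"
where
  "mso_eval P lt m v1 v2 (MLess x y) = (v1 x < v1 y)"
| "mso_eval P lt m v1 v2 (MEq x y) = (v1 x = v1 y)"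
| "mso_eval P lt m v1 v2 (MAlpha F x) = P F (lt (v1 x))"
| "mso_eval P lt m v1 v2 (MMem x X) = (v1 x \<in> v2 X)"
| "mso_eval P lt m v1 v2 (MNeg \<psi>) = (\<not> mso_eval P lt m v1 v2 \<psi>)"
| "mso_eval P lt m v1 v2 (MConj \<psi> \<chi>) = (mso_eval P lt m v1 v2 \<psi> \<and> mso_eval P lt m v1 v2 \<chi>)"
| "mso_eval P lt m v1 v2 (MEx1 x \<psi>) = (\<exists>p < m. mso_eval P lt m (v1(x := p)) v2 \<psi>)"
| "mso_eval P lt m v1 v2 (MEx2 X \<psi>) = (\<exists>S \<subseteq> {..<m}. mso_eval P lt m v1 (v2(X := S)) \<psi>)"

lemma mso_sat_eq_mso_eval: "mso_sat I w v1 v2 \<psi> = mso_eval (\<lambda>F c. fo_sat I c F) (col w) (padlen w) v1 v2 \<psi>"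
  by (induction \<psi> arbitrary: v1 v2) auto

lemma finite_mso_fv1: "finite (mso_fv1 \<psi>)"
  by (induction \<psi>) auto

definition mso_lang :: "('r fo \<Rightarrow> 'c \<Rightarrow> bool) \<Rightarrow> 'r mso \<Rightarrow> 'c ann list set" where
  "mso_lang P \<psi> = {u. u \<in> once_marked (mso_fv1 \<psi>) \<and> mso_eval P (letter u) (length u) (pos u) (pset u) \<psi>}"

lemma mso_lang_MNeg: "mso_lang P (MNeg \<psi>) = once_marked (mso_fv1 \<psi>) - mso_lang P \<psi>"
  by (auto simp: mso_lang_def)

lemma mso_lang_MConj: "mso_lang P (MConj \<psi> \<chi>) = mso_lang P \<psi> \<inter> mso_lang P \<chi>"
  by (auto simp: mso_lang_def once_marked_def)

lemma contains_marked_letter_iff: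
  "u \<in> contains_letter {l. x \<in> fst (snd l) \<and> Q l} \<longleftrightarrow> (\<exists>i. marked u x i \<and> Q (u ! i))"
proof
  assume "u \<in> contains_letter {l. x \<in> fst (snd l) \<and> Q l}"
  then obtain l where "l \<in> set u" "x \<in> fst (snd l)" "Q l"
    by (auto simp: contains_letter_def)
  then show "\<exists>i. marked u x i \<and> Q (u ! i)"
    unfolding marked_def in_set_conv_nth by blast
next
  assume "\<exists>i. marked u x i \<and> Q (u ! i)"
  then show "u \<in> contains_letter {l. x \<in> fst (snd l) \<and> Q l}"
    unfolding contains_letter_def marked_def by (blast intro: nth_mem)
qed

lemma contains_marked_iff: "u \<in> contains_letter {l. x \<in> fst (snd l)} \<longleftrightarrow> (\<exists>i. marked u x i)"
  using contains_marked_letter_iff[where Q = "\<lambda>_. True"] by simp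

lemma mso_lang_MLess:
  fixes P :: "'r fo \<Rightarrow> 'c \<Rightarrow> bool"
  shows "mso_lang P (MLess x y) =
     once_marked {x, y} \<inter> conc (contains_letter {l. x \<in> fst (snd l)}) (contains_letter {l. y \<in> fst (snd l)})"
proof -
  have "pos u x < pos u y \<longleftrightarrow> u \<in> conc (contains_letter {l. x \<in> fst (snd l)}) (contains_letter {l. y \<in> fst (snd l)})"
    if "u \<in> once_marked {x, y}" for u :: "'c ann list"
  proof -
    have x: "marked u x i \<longleftrightarrow> i = pos u x" and y: "marked u y i \<longleftrightarrow> i = pos u y" for i
      using that by (simp_all add: once_marked_def marked_iff_pos)
    show ?thesis
    proof
      assume "pos u x < pos u y"
      moreover have "marked u x (pos u x)" "marked u y (pos u y)"
        using x y by blast+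
      ultimately have "marked (take (pos u y) u) x (pos u x)" "marked (drop (pos u y) u) y 0"
        unfolding marked_def by simp_all
      then have "take (pos u y) u \<in> contains_letter {l. x \<in> fst (snd l)}"
        "drop (pos u y) u \<in> contains_letter {l. y \<in> fst (snd l)}"
        using contains_marked_iff by auto
      from concI[OF this]
      show "u \<in> conc (contains_letter {l. x \<in> fst (snd l)}) (contains_letter {l. y \<in> fst (snd l)})"
        by simp
    next
      assume "u \<in> conc (contains_letter {l. x \<in> fst (snd l)}) (contains_letter {l. y \<in> fst (snd l)})"
      then obtain v v' i j where "u = v @ v'" "marked v x i" "marked v' y j"
        unfolding conc_def contains_marked_iff by blast
      then have "marked u x i" "marked u y (length v + j)" "i < length v + j"
        by (auto simp: marked_def nth_append)
      with x y show "pos u x < pos u y" by simp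
    qed
  qed
  then show ?thesis by (auto simp: mso_lang_def once_marked_def)
qed

lemma mso_lang_MEq:
  fixes P :: "'r fo \<Rightarrow> 'c \<Rightarrow> bool"
  shows "mso_lang P (MEq x y) = once_marked {x, y} \<inter> contains_letter {l. x \<in> fst (snd l) \<and> y \<in> fst (snd l)}"
proof -
  have "pos u x = pos u y \<longleftrightarrow> u \<in> contains_letter {l. x \<in> fst (snd l) \<and> y \<in> fst (snd l)}"
    if "u \<in> once_marked {x, y}" for u :: "'c ann list"
  proof -
    have "marked u x i \<longleftrightarrow> i = pos u x" "marked u y i \<longleftrightarrow> i = pos u y" for i
      using that by (simp_all add: once_marked_def marked_iff_pos)
    then show ?thesis
      unfolding contains_marked_letter_iff by (auto simp: marked_def)
  qed
  then show ?thesis by (auto simp: mso_lang_def once_marked_def)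
qed

lemma mso_lang_MAlpha:
  fixes P :: "'r fo \<Rightarrow> 'c \<Rightarrow> bool"
  shows "mso_lang P (MAlpha F x) = once_marked {x} \<inter> contains_letter {l. x \<in> fst (snd l) \<and> P F (fst l)}"
proof -
  have "P F (letter u (pos u x)) \<longleftrightarrow> u \<in> contains_letter {l. x \<in> fst (snd l) \<and> P F (fst l)}"
    if "u \<in> once_marked {x}" for u :: "'c ann list"
  proof -
    have "marked u x i \<longleftrightarrow> i = pos u x" for i
      using that by (simp add: once_marked_def marked_iff_pos)
    moreover have "pos u x < length u"
      using that by (simp add: once_marked_def pos_less_length)
    ultimately show ?thesis
      unfolding contains_marked_letter_iff by (auto simp: letter_def)
  qed
  then show ?thesis by (auto simp: mso_lang_def once_marked_def)
qed

lemma mso_lang_MMem: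
  fixes P :: "'r fo \<Rightarrow> 'c \<Rightarrow> bool"
  shows "mso_lang P (MMem x X) = once_marked {x} \<inter> contains_letter {l. x \<in> fst (snd l) \<and> X \<in> snd (snd l)}"
proof -
  have "pos u x \<in> pset u X \<longleftrightarrow> u \<in> contains_letter {l. x \<in> fst (snd l) \<and> X \<in> snd (snd l)}"
    if "u \<in> once_marked {x}" for u :: "'c ann list"
  proof -
    have "marked u x i \<longleftrightarrow> i = pos u x" for i
      using that by (simp add: once_marked_def marked_iff_pos)
    moreover have "pos u x < length u"
      using that by (simp add: once_marked_def pos_less_length)
    ultimately show ?thesis
      unfolding contains_marked_letter_iff by (auto simp: pset_def)
  qed
  then show ?thesis by (auto simp: mso_lang_def once_marked_def)
qed

definition agree_off1 :: "nat \<Rightarrow> 'c ann \<Rightarrow> 'c ann \<Rightarrow> bool" where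
  "agree_off1 x l l' \<longleftrightarrow>
     fst l = fst l' \<and> fst (snd l) - {x} = fst (snd l') - {x} \<and> snd (snd l) = snd (snd l')"

definition agree_off2 :: "nat \<Rightarrow> 'c ann \<Rightarrow> 'c ann \<Rightarrow> bool" where
  "agree_off2 X l l' \<longleftrightarrow>
     fst l = fst l' \<and> fst (snd l) = fst (snd l') \<and> snd (snd l) - {X} = snd (snd l') - {X}"

definition move_mark :: "nat \<Rightarrow> nat \<Rightarrow> 'c ann list \<Rightarrow> 'c ann list" where
  "move_mark x p u = map (\<lambda>i. (fst (u ! i),
     if i = p then insert x (fst (snd (u ! i))) else fst (snd (u ! i)) - {x}, snd (snd (u ! i)))) [0..<length u]"

definition set_marks :: "nat \<Rightarrow> nat set \<Rightarrow> 'c ann list \<Rightarrow> 'c ann list" where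
  "set_marks X S u = map (\<lambda>i. (fst (u ! i), fst (snd (u ! i)),
     if i \<in> S then insert X (snd (snd (u ! i))) else snd (snd (u ! i)) - {X})) [0..<length u]"

lemma agree_off1_move_mark: "list_all2 (agree_off1 x) u (move_mark x p u)"
  by (auto simp: list_all2_conv_all_nth move_mark_def agree_off1_def)

lemma marked_move_mark: "p < length u \<Longrightarrow> marked (move_mark x p u) x i \<longleftrightarrow> i = p"
  by (auto simp: marked_def move_mark_def split: if_splits)

lemma agree_off2_set_marks: "list_all2 (agree_off2 X) u (set_marks X S u)"
  by (auto simp: list_all2_conv_all_nth set_marks_def agree_off2_def)

lemma pset_set_marks: "S \<subseteq> {..<length u} \<Longrightarrow> pset (set_marks X S u) X = S"
  by (auto simp: pset_def set_marks_def split: if_splits)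

lemma agree_off1_transfer:
  assumes "list_all2 (agree_off1 x) u u'"
  shows "length u' = length u" "letter u' = letter u" "pset u' = pset u"
    and "y \<noteq> x \<Longrightarrow> marked u' y = marked u y"
  using assms by (auto simp: list_all2_conv_all_nth agree_off1_def letter_def pset_def marked_def fun_eq_iff)

lemma agree_off2_transfer:
  assumes "list_all2 (agree_off2 X) u u'"
  shows "length u' = length u" "letter u' = letter u" "marked u' = marked u"
    and "Y \<noteq> X \<Longrightarrow> pset u' Y = pset u Y"
  using assms by (auto simp: list_all2_conv_all_nth agree_off2_def letter_def pset_def marked_def fun_eq_iff)

lemma agree_off1_pos_mark_count:
  assumes "list_all2 (agree_off1 x) u u'"
  shows "pos u' = (pos u)(x := pos u' x)" "y \<noteq> x \<Longrightarrow> mark_count u' y = mark_count u y"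
proof -
  have same: "y \<noteq> x \<Longrightarrow> marked u' y = marked u y" for y
    using agree_off1_transfer(4)[OF assms] .
  show "pos u' = (pos u)(x := pos u' x)"
  proof
    fix y show "pos u' y = ((pos u)(x := pos u' x)) y"
      using same[of y] by (cases "y = x") (simp_all add: pos_def)
  qed
  show "y \<noteq> x \<Longrightarrow> mark_count u' y = mark_count u y"
    using same[of y] by (simp add: mark_count_def)
qed

lemma agree_off2_pos_mark_count:
  assumes "list_all2 (agree_off2 X) u u'"
  shows "pos u' = pos u" "mark_count u' = mark_count u"
  unfolding pos_def mark_count_def agree_off2_transfer(3)[OF assms] by simp_all

lemma mso_lang_MEx1:
  "mso_lang P (MEx1 x \<psi>) =
     once_marked (mso_fv1 \<psi> - {x}) \<inter> rel_proj (agree_off1 x) (mso_lang P \<psi> \<inter> once_marked {x})"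
proof (intro set_eqI iffI)
  fix u assume "u \<in> mso_lang P (MEx1 x \<psi>)"
  then obtain p where u: "u \<in> once_marked (mso_fv1 \<psi> - {x})" and "p < length u"
    and sat: "mso_eval P (letter u) (length u) ((pos u)(x := p)) (pset u) \<psi>"
    by (auto simp: mso_lang_def)
  define u' where "u' = move_mark x p u"
  have rel: "list_all2 (agree_off1 x) u u'"
    unfolding u'_def by (rule agree_off1_move_mark)
  have "marked u' x = (\<lambda>i. i = p)"
    using \<open>p < length u\<close> by (auto simp: u'_def marked_move_mark)
  then have x: "mark_count u' x = 1" "pos u' x = p"
    by (auto simp: mark_count_def pos_def Least_equality)
  have "mso_eval P (letter u') (length u') (pos u') (pset u') \<psi>"
    using sat agree_off1_pos_mark_count(1)[OF rel] by (simp add: x agree_off1_transfer[OF rel])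
  moreover have "mark_count u' y = 1" if "y \<in> mso_fv1 \<psi>" for y
    using that u x(1) agree_off1_pos_mark_count(2)[OF rel, of y]
    by (cases "y = x") (simp_all add: once_marked_def)
  ultimately have "u' \<in> mso_lang P \<psi> \<inter> once_marked {x}"
    using x(1) by (simp add: mso_lang_def once_marked_def)
  with u rel show "u \<in> once_marked (mso_fv1 \<psi> - {x}) \<inter> rel_proj (agree_off1 x) (mso_lang P \<psi> \<inter> once_marked {x})"
    unfolding rel_proj_def by blast
next
  fix u assume "u \<in> once_marked (mso_fv1 \<psi> - {x}) \<inter> rel_proj (agree_off1 x) (mso_lang P \<psi> \<inter> once_marked {x})"
  then obtain u' where u: "u \<in> once_marked (mso_fv1 \<psi> - {x})" and rel: "list_all2 (agree_off1 x) u u'"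
    and u': "u' \<in> mso_lang P \<psi>" "mark_count u' x = 1"
    by (auto simp: rel_proj_def once_marked_def)
  have "pos u' x < length u"
    using pos_less_length[OF u'(2)] agree_off1_transfer(1)[OF rel] by simp
  moreover have "mso_eval P (letter u) (length u) ((pos u)(x := pos u' x)) (pset u) \<psi>"
    using u' agree_off1_pos_mark_count(1)[OF rel] by (simp add: mso_lang_def agree_off1_transfer[OF rel])
  ultimately show "u \<in> mso_lang P (MEx1 x \<psi>)"
    using u by (auto simp: mso_lang_def)
qed

lemma mso_lang_MEx2: "mso_lang P (MEx2 X \<psi>) = rel_proj (agree_off2 X) (mso_lang P \<psi>)"
proof (intro set_eqI iffI)
  fix u assume "u \<in> mso_lang P (MEx2 X \<psi>)"
  then obtain S where u: "u \<in> once_marked (mso_fv1 \<psi>)" and S: "S \<subseteq> {..<length u}"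
    and sat: "mso_eval P (letter u) (length u) (pos u) ((pset u)(X := S)) \<psi>"
    by (auto simp: mso_lang_def)
  define u' where "u' = set_marks X S u"
  have rel: "list_all2 (agree_off2 X) u u'"
    unfolding u'_def by (rule agree_off2_set_marks)
  have "pset u' = (pset u)(X := S)"
    using pset_set_marks[OF S] agree_off2_transfer(4)[OF rel] by (auto simp: u'_def fun_eq_iff)
  with u rel sat have "u' \<in> mso_lang P \<psi>"
    by (simp add: mso_lang_def once_marked_def agree_off2_transfer agree_off2_pos_mark_count)
  with rel show "u \<in> rel_proj (agree_off2 X) (mso_lang P \<psi>)"
    unfolding rel_proj_def by blast
next
  fix u assume "u \<in> rel_proj (agree_off2 X) (mso_lang P \<psi>)"
  then obtain u' where rel: "list_all2 (agree_off2 X) u u'" and u': "u' \<in> mso_lang P \<psi>"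
    by (auto simp: rel_proj_def)
  define S where "S = pset u' X"
  have "pset u' = (pset u)(X := S)" "S \<subseteq> {..<length u}"
    using agree_off2_transfer[OF rel] by (auto simp: S_def pset_def fun_eq_iff)
  with u' rel show "u \<in> mso_lang P (MEx2 X \<psi>)"
    unfolding mso_lang_def once_marked_def
    by (auto simp: agree_off2_transfer agree_off2_pos_mark_count)
qed

theorem finite_lquots_mso_lang: "finite_lquots (mso_lang P \<psi>)"
proof (induction \<psi>)
  case (MLess x y)
  show ?case
    unfolding mso_lang_MLess
    by (intro finite_lquots_Int finite_lquots_once_marked finite_lquots_conc finite_lquots_contains_letter) simp
next
  case (MEq x y)
  show ?case
    unfolding mso_lang_MEq by (intro finite_lquots_Int finite_lquots_once_marked finite_lquots_contains_letter) simp
next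
  case (MAlpha F x)
  show ?case
    unfolding mso_lang_MAlpha by (intro finite_lquots_Int finite_lquots_once_marked finite_lquots_contains_letter) simp
next
  case (MMem x X)
  show ?case
    unfolding mso_lang_MMem by (intro finite_lquots_Int finite_lquots_once_marked finite_lquots_contains_letter) simp
next
  case (MNeg \<psi>)
  show ?case
    unfolding mso_lang_MNeg by (intro finite_lquots_Diff finite_lquots_once_marked finite_mso_fv1 MNeg)
next
  case (MConj \<psi> \<chi>)
  show ?case
    unfolding mso_lang_MConj by (intro finite_lquots_Int MConj)
next
  case (MEx1 x \<psi>)
  show ?case
    unfolding mso_lang_MEx1
    by (intro finite_lquots_Int finite_lquots_once_marked finite_lquots_rel_proj MEx1 finite_Diff finite_mso_fv1) simp
next
  case (MEx2 X \<psi>)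
  show ?case
    unfolding mso_lang_MEx2 by (intro finite_lquots_rel_proj MEx2)
qed

section \<open>From MSO sentences to automata\<close>

definition columns :: "'a list list \<Rightarrow> (nat \<Rightarrow> 'a option) list" where
  "columns w = map (col w) [0..<padlen w]"

lemma length_columns: "length (columns w) = padlen w"
  by (simp add: columns_def)

lemma nth_columns: "i < padlen w \<Longrightarrow> columns w ! i = col w i"
  by (simp add: columns_def)

lemma aut_accepts_deterministic:
  assumes step: "\<And>v c q'. (\<exists>\<phi>. (g v, \<phi>, q') \<in> E \<and> fo_sat I c \<phi>) \<longleftrightarrow> q' = g (v @ [c])"
  shows "aut_accepts I E {g []} T w \<longleftrightarrow> g (columns w) \<in> T"
proof -
  define run where "run i = g (take i (columns w))" for i
  have run_Suc: "run (Suc i) = g (take i (columns w) @ [col w i])" if "i < padlen w" for i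
    using that by (simp add: run_def length_columns nth_columns take_Suc_conv_app_nth)
  have run_end: "run (padlen w) = g (columns w)"
    by (simp add: run_def length_columns)
  show ?thesis
  proof
    assume "aut_accepts I E {g []} T w"
    then obtain qs where "qs 0 = g []" "qs (padlen w) \<in> T"
      and trans: "\<forall>i<padlen w. \<exists>\<phi>. (qs i, \<phi>, qs (Suc i)) \<in> E \<and> fo_sat I (col w i) \<phi>"
      by (auto simp: aut_accepts_def)
    have "qs i = run i" if "i \<le> padlen w" for i
      using that
    proof (induction i)
      case 0
      then show ?case using \<open>qs 0 = g []\<close> by (simp add: run_def)
    next
      case (Suc i)
      then have "i < padlen w" "qs i = run i"
        by simp_all
      with trans have "\<exists>\<phi>. (g (take i (columns w)), \<phi>, qs (Suc i)) \<in> E \<and> fo_sat I (col w i) \<phi>"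
        unfolding run_def by metis
      with \<open>i < padlen w\<close> show ?case
        using step run_Suc by simp
    qed
    with \<open>qs (padlen w) \<in> T\<close> run_end show "g (columns w) \<in> T"
      by simp
  next
    assume "g (columns w) \<in> T"
    moreover have "\<exists>\<phi>. (run i, \<phi>, run (Suc i)) \<in> E \<and> fo_sat I (col w i) \<phi>" if "i < padlen w" for i
      using step run_Suc[OF that] by (simp add: run_def)
    ultimately show "aut_accepts I E {g []} T w"
      unfolding aut_accepts_def using run_end by (intro exI[of _ run]) (simp add: run_def)
  qed
qed

text \<open>Closed, so that type formulas belong to \<open>F\<^sub>n\<close> for every \<open>n\<close>.\<close>

definition fo_true :: "'r fo" where
  "fo_true = FNeg (FEx 0 (FNeg (FEq 0 0)))"

fun type_formula :: "'r fo list \<Rightarrow> bool list \<Rightarrow> 'r fo" where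
  "type_formula (F # Fs) (b # bs) = FConj (if b then F else FNeg F) (type_formula Fs bs)"
| "type_formula _ _ = fo_true"

lemma fo_sat_type_formula:
  "length bs = length Fs \<Longrightarrow> fo_sat I c (type_formula Fs bs) \<longleftrightarrow> map (\<lambda>F. fo_sat I c F) Fs = bs"
  by (induction Fs bs rule: type_formula.induct) (auto simp: fo_true_def)

lemma fo_formula_n_type_formula:
  "\<forall>F\<in>set Fs. fo_formula_n L ar n F \<Longrightarrow> fo_formula_n L ar n (type_formula Fs bs)"
  by (induction Fs bs rule: type_formula.induct) (auto simp: fo_formula_n_def fo_true_def)

definition type_of :: "('r \<Rightarrow> 'a list set) \<Rightarrow> 'r fo list \<Rightarrow> (nat \<Rightarrow> 'a option) \<Rightarrow> bool list" where
  "type_of I Fs c = map (\<lambda>F. fo_sat I c F) Fs"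

text \<open>The state reached after reading \<open>v\<close> is the code of \<open>lquot v L0\<close>.\<close>

definition quotient_edges ::
  "('r \<Rightarrow> 'a list set) \<Rightarrow> 'r fo list \<Rightarrow> ((nat \<Rightarrow> 'a option) list set \<Rightarrow> nat) \<Rightarrow>
    (nat \<Rightarrow> 'a option) list set \<Rightarrow> (nat \<times> 'r fo \<times> nat) set" where
  "quotient_edges I Fs f L0 =
     {(f (lquot v L0), type_formula Fs (type_of I Fs c), f (lquot (v @ [c]) L0)) | v c. True}"

lemma quotient_edges_deterministic:
  fixes L0 :: "(nat \<Rightarrow> 'a option) list set"
  assumes inj: "inj_on f (range (\<lambda>v. lquot v L0))"
    and L0_type: "\<And>u v c c'. type_of I Fs c = type_of I Fs c' \<Longrightarrow> u @ c # v \<in> L0 \<longleftrightarrow> u @ c' # v \<in> L0"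
  shows "(\<exists>\<phi>. (f (lquot v L0), \<phi>, q') \<in> quotient_edges I Fs f L0 \<and> fo_sat I c \<phi>) \<longleftrightarrow>
    q' = f (lquot (v @ [c]) L0)"
proof
  assume "\<exists>\<phi>. (f (lquot v L0), \<phi>, q') \<in> quotient_edges I Fs f L0 \<and> fo_sat I c \<phi>"
  then obtain \<phi> v' c' where sat: "fo_sat I c \<phi>"
    and e: "(f (lquot v L0), \<phi>, q') = (f (lquot v' L0), type_formula Fs (type_of I Fs c'), f (lquot (v' @ [c']) L0))"
    by (auto simp: quotient_edges_def)
  then have q': "q' = f (lquot (v' @ [c']) L0)"
    by simp
  from e have "f (lquot v L0) = f (lquot v' L0)"
    by simp
  then have "lquot v L0 = lquot v' L0"
    by (rule inj_onD[OF inj]) simp_all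
  from e sat have type: "type_of I Fs c = type_of I Fs c'"
    by (simp add: fo_sat_type_formula type_of_def)
  have "lquot (v' @ [c']) L0 = lquot [c'] (lquot v L0)"
    by (simp add: lquot_lquot \<open>lquot v L0 = lquot v' L0\<close>)
  also have "\<dots> = lquot (v @ [c]) L0"
    using L0_type[OF type] by (auto simp: lquot_def)
  finally have "lquot (v' @ [c']) L0 = lquot (v @ [c]) L0" .
  with q' show "q' = f (lquot (v @ [c]) L0)"
    by simp
next
  assume "q' = f (lquot (v @ [c]) L0)"
  moreover have "fo_sat I c (type_formula Fs (type_of I Fs c))"
    by (simp add: fo_sat_type_formula type_of_def)
  ultimately show "\<exists>\<phi>. (f (lquot v L0), \<phi>, q') \<in> quotient_edges I Fs f L0 \<and> fo_sat I c \<phi>"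
    unfolding quotient_edges_def by blast
qed

lemma automaton_of_finite_lquots:
  fixes L0 :: "(nat \<Rightarrow> 'a option) list set" and I :: "'r \<Rightarrow> 'a list set"
  assumes "finite_lquots L0" and Fs: "\<forall>F\<in>set Fs. fo_formula_n L ar n F"
    and L0_type: "\<And>u v c c'. type_of I Fs c = type_of I Fs c' \<Longrightarrow> u @ c # v \<in> L0 \<longleftrightarrow> u @ c' # v \<in> L0"
  shows "\<exists>Q E I0 T. is_automaton L ar n Q E I0 T \<and> (\<forall>w. aut_accepts I E I0 T w \<longleftrightarrow> columns w \<in> L0)"
proof -
  define Qs where "Qs = range (\<lambda>v. lquot v L0)"
  have "finite Qs"
    using \<open>finite_lquots L0\<close> by (simp add: Qs_def finite_lquots_def)
  then obtain f :: "(nat \<Rightarrow> 'a option) list set \<Rightarrow> nat" where inj: "inj_on f Qs"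
    using finite_imp_inj_to_nat_seg by blast
  define E where "E = quotient_edges I Fs f L0"
  define T where "T = f ` {q \<in> Qs. [] \<in> q}"
  have "finite (range (type_of I Fs))"
  proof (rule finite_subset)
    show "range (type_of I Fs) \<subseteq> {bs. length bs = length Fs}"
      by (auto simp: type_of_def)
    show "finite {bs :: bool list. length bs = length Fs}"
      using finite_lists_length_eq[of "UNIV :: bool set" "length Fs"] by simp
  qed
  moreover have "E \<subseteq> f ` Qs \<times> type_formula Fs ` range (type_of I Fs) \<times> f ` Qs"
    by (auto simp: E_def quotient_edges_def Qs_def)
  ultimately have "finite E"
    using \<open>finite Qs\<close> by (auto intro: finite_subset)
  moreover have "E \<subseteq> f ` Qs \<times> {\<phi>. fo_formula_n L ar n \<phi>} \<times> f ` Qs"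
    using fo_formula_n_type_formula[OF Fs] by (auto simp: E_def quotient_edges_def Qs_def)
  moreover have "f (lquot [] L0) \<in> f ` Qs"
    by (simp add: Qs_def)
  ultimately have "is_automaton L ar n (f ` Qs) E {f (lquot [] L0)} T"
    using \<open>finite Qs\<close> by (auto simp: is_automaton_def T_def)
  moreover have "aut_accepts I E {f (lquot [] L0)} T w \<longleftrightarrow> columns w \<in> L0" for w
  proof -
    have "aut_accepts I E {f (lquot [] L0)} T w \<longleftrightarrow> f (lquot (columns w) L0) \<in> T"
      using quotient_edges_deterministic[OF inj[unfolded Qs_def] L0_type]
      unfolding E_def by (rule aut_accepts_deterministic)
    also have "\<dots> \<longleftrightarrow> [] \<in> lquot (columns w) L0"
      using inj by (auto simp: T_def Qs_def inj_on_eq_iff)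
    finally show ?thesis
      by (simp add: lquot_def)
  qed
  ultimately show ?thesis
    by blast
qed

fun atoms :: "'r mso \<Rightarrow> 'r fo set" where
  "atoms (MAlpha F x) = {F}"
| "atoms (MNeg \<psi>) = atoms \<psi>"
| "atoms (MConj \<psi> \<chi>) = atoms \<psi> \<union> atoms \<chi>"
| "atoms (MEx1 x \<psi>) = atoms \<psi>"
| "atoms (MEx2 X \<psi>) = atoms \<psi>"
| "atoms _ = {}"

lemma finite_atoms: "finite (atoms \<psi>)"
  by (induction \<psi>) auto

lemma fo_formula_n_atoms: "mso_ok L ar n \<psi> \<Longrightarrow> F \<in> atoms \<psi> \<Longrightarrow> fo_formula_n L ar n F"
  by (induction \<psi>) auto

lemma mso_eval_cong:
  assumes "\<And>i F. i < m \<Longrightarrow> F \<in> atoms \<psi> \<Longrightarrow> P F (lt i) = P F (lt' i)"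
    and "\<forall>x\<in>mso_fv1 \<psi>. v1 x < m"
  shows "mso_eval P lt m v1 v2 \<psi> = mso_eval P lt' m v1 v2 \<psi>"
  using assms
proof (induction \<psi> arbitrary: v1 v2)
  case (MEx1 x \<psi>)
  have "mso_eval P lt m (v1(x := p)) v2 \<psi> = mso_eval P lt' m (v1(x := p)) v2 \<psi>" if "p < m" for p
    using MEx1.prems that by (intro MEx1.IH) auto
  then show ?case by auto
qed auto

definition unmarked :: "'c list \<Rightarrow> 'c ann list" where
  "unmarked cs = map (\<lambda>c. (c, {}, {})) cs"

lemma unmarked_simps:
  "length (unmarked cs) = length cs" "pos (unmarked cs) = (\<lambda>_. 0)" "pset (unmarked cs) = (\<lambda>_. {})"
  "i < length cs \<Longrightarrow> letter (unmarked cs) i = cs ! i"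
  by (auto simp: unmarked_def pos_def marked_def pset_def letter_def fun_eq_iff)

theorem automaton_of_mso_sentence:
  fixes I :: "'r \<Rightarrow> 'a list set"
  assumes "mso_ok L ar n \<psi>" and "mso_sentence \<psi>"
  shows "\<exists>Q E I0 T. is_automaton L ar n Q E I0 T \<and> (\<forall>w. aut_accepts I E I0 T w \<longleftrightarrow> mso_holds I w \<psi>)"
proof -
  define P :: "'r fo \<Rightarrow> (nat \<Rightarrow> 'a option) \<Rightarrow> bool" where "P = (\<lambda>F c. fo_sat I c F)"
  define L0 where "L0 = {cs. unmarked cs \<in> mso_lang P \<psi>}"
  have closed: "mso_fv1 \<psi> = {}"
    using \<open>mso_sentence \<psi>\<close> by (simp add: mso_sentence_def)
  obtain Fs where Fs: "set Fs = atoms \<psi>"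
    using finite_atoms finite_list by blast
  have L0_iff: "cs \<in> L0 \<longleftrightarrow> mso_eval P (\<lambda>i. cs ! i) (length cs) (\<lambda>_. 0) (\<lambda>_. {}) \<psi>" for cs
    unfolding L0_def mso_lang_def using closed
    by (auto simp: once_marked_def unmarked_simps intro!: mso_eval_cong)
  have fin: "finite_lquots L0"
    unfolding L0_def unmarked_def by (intro finite_lquots_vimage_map finite_lquots_mso_lang)
  have Fs_ok: "\<forall>F\<in>set Fs. fo_formula_n L ar n F"
    using Fs fo_formula_n_atoms[OF \<open>mso_ok L ar n \<psi>\<close>] by blast
  have L0_type: "u @ c # v \<in> L0 \<longleftrightarrow> u @ c' # v \<in> L0"
    if "type_of I Fs c = type_of I Fs c'" for u v c c'
  proof -
    have "P F c = P F c'" if "F \<in> atoms \<psi>" for F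
      using \<open>type_of I Fs c = type_of I Fs c'\<close> that Fs
      by (auto simp: P_def type_of_def map_eq_conv)
    then show ?thesis
      unfolding L0_iff length_append length_Cons using closed
      by (intro mso_eval_cong) (auto simp: nth_append nth_Cons')
  qed
  obtain Q E I0 T where "is_automaton L ar n Q E I0 T"
    and "\<forall>w. aut_accepts I E I0 T w \<longleftrightarrow> columns w \<in> L0"
    using automaton_of_finite_lquots[OF fin Fs_ok L0_type] by blast
  moreover have "mso_holds I w \<psi> \<longleftrightarrow> columns w \<in> L0" for w :: "'a list list"
    unfolding mso_holds_def mso_sat_eq_mso_eval L0_iff P_def[symmetric] length_columns using closed
    by (intro mso_eval_cong) (simp_all add: nth_columns)
  ultimately show ?thesis
    by blast
qed

section \<open>From automata to MSO sentences\<close>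

definition mso_true :: "'r mso" where
  "mso_true = MNeg (MEx1 0 (MLess 0 0))"

definition mso_false :: "'r mso" where
  "mso_false = MNeg mso_true"

definition mso_disj :: "'r mso \<Rightarrow> 'r mso \<Rightarrow> 'r mso" where
  "mso_disj \<psi> \<chi> = MNeg (MConj (MNeg \<psi>) (MNeg \<chi>))"

definition mso_imp :: "'r mso \<Rightarrow> 'r mso \<Rightarrow> 'r mso" where
  "mso_imp \<psi> \<chi> = MNeg (MConj \<psi> (MNeg \<chi>))"

definition mso_all1 :: "nat \<Rightarrow> 'r mso \<Rightarrow> 'r mso" where
  "mso_all1 x \<psi> = MNeg (MEx1 x (MNeg \<psi>))"

definition mso_conjs :: "'r mso list \<Rightarrow> 'r mso" where
  "mso_conjs \<psi>s = foldr MConj \<psi>s mso_true"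

definition mso_disjs :: "'r mso list \<Rightarrow> 'r mso" where
  "mso_disjs \<psi>s = foldr mso_disj \<psi>s mso_false"

definition mso_exs2 :: "nat list \<Rightarrow> 'r mso \<Rightarrow> 'r mso" where
  "mso_exs2 Xs \<psi> = foldr MEx2 Xs \<psi>"

lemma mso_sat_derived [simp]:
  "mso_sat I w v1 v2 mso_true"
  "\<not> mso_sat I w v1 v2 mso_false"
  "mso_sat I w v1 v2 (mso_disj \<psi> \<chi>) \<longleftrightarrow> mso_sat I w v1 v2 \<psi> \<or> mso_sat I w v1 v2 \<chi>"
  "mso_sat I w v1 v2 (mso_imp \<psi> \<chi>) \<longleftrightarrow> (mso_sat I w v1 v2 \<psi> \<longrightarrow> mso_sat I w v1 v2 \<chi>)"
  "mso_sat I w v1 v2 (mso_all1 x \<psi>) \<longleftrightarrow> (\<forall>p<padlen w. mso_sat I w (v1(x := p)) v2 \<psi>)"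
  "mso_sat I w v1 v2 (mso_conjs \<psi>s) \<longleftrightarrow> (\<forall>\<psi>\<in>set \<psi>s. mso_sat I w v1 v2 \<psi>)"
  "mso_sat I w v1 v2 (mso_disjs \<psi>s) \<longleftrightarrow> (\<exists>\<psi>\<in>set \<psi>s. mso_sat I w v1 v2 \<psi>)"
  by (induction \<psi>s) (auto simp: mso_true_def mso_false_def mso_disj_def mso_imp_def mso_all1_def
      mso_conjs_def mso_disjs_def)

lemma mso_fv_ok_derived [simp]:
  "mso_fv1 mso_true = {}" "mso_fv2 mso_true = {}" "mso_ok L ar n mso_true"
  "mso_fv1 mso_false = {}" "mso_fv2 mso_false = {}" "mso_ok L ar n mso_false"
  "mso_fv1 (mso_disj \<psi> \<chi>) = mso_fv1 \<psi> \<union> mso_fv1 \<chi>" "mso_fv2 (mso_disj \<psi> \<chi>) = mso_fv2 \<psi> \<union> mso_fv2 \<chi>"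
  "mso_ok L ar n (mso_disj \<psi> \<chi>) \<longleftrightarrow> mso_ok L ar n \<psi> \<and> mso_ok L ar n \<chi>"
  "mso_fv1 (mso_imp \<psi> \<chi>) = mso_fv1 \<psi> \<union> mso_fv1 \<chi>" "mso_fv2 (mso_imp \<psi> \<chi>) = mso_fv2 \<psi> \<union> mso_fv2 \<chi>"
  "mso_ok L ar n (mso_imp \<psi> \<chi>) \<longleftrightarrow> mso_ok L ar n \<psi> \<and> mso_ok L ar n \<chi>"
  "mso_fv1 (mso_all1 x \<psi>) = mso_fv1 \<psi> - {x}" "mso_fv2 (mso_all1 x \<psi>) = mso_fv2 \<psi>"
  "mso_ok L ar n (mso_all1 x \<psi>) \<longleftrightarrow> mso_ok L ar n \<psi>"
  "mso_fv1 (mso_conjs \<psi>s) = (\<Union>\<psi>\<in>set \<psi>s. mso_fv1 \<psi>)" "mso_fv2 (mso_conjs \<psi>s) = (\<Union>\<psi>\<in>set \<psi>s. mso_fv2 \<psi>)"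
  "mso_ok L ar n (mso_conjs \<psi>s) \<longleftrightarrow> (\<forall>\<psi>\<in>set \<psi>s. mso_ok L ar n \<psi>)"
  "mso_fv1 (mso_disjs \<psi>s) = (\<Union>\<psi>\<in>set \<psi>s. mso_fv1 \<psi>)" "mso_fv2 (mso_disjs \<psi>s) = (\<Union>\<psi>\<in>set \<psi>s. mso_fv2 \<psi>)"
  "mso_ok L ar n (mso_disjs \<psi>s) \<longleftrightarrow> (\<forall>\<psi>\<in>set \<psi>s. mso_ok L ar n \<psi>)"
  "mso_fv1 (mso_exs2 Xs \<psi>) = mso_fv1 \<psi>" "mso_fv2 (mso_exs2 Xs \<psi>) = mso_fv2 \<psi> - set Xs"
  "mso_ok L ar n (mso_exs2 Xs \<psi>) \<longleftrightarrow> mso_ok L ar n \<psi>"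
  by (induction \<psi>s; induction Xs; auto simp: mso_true_def mso_false_def mso_disj_def mso_imp_def
      mso_all1_def mso_conjs_def mso_disjs_def mso_exs2_def)+

lemma mso_sat_exs2:
  "mso_sat I w v1 v2 (mso_exs2 Xs \<psi>) \<longleftrightarrow>
     (\<exists>V. (\<forall>X\<in>set Xs. V X \<subseteq> {..<padlen w}) \<and> (\<forall>X. X \<notin> set Xs \<longrightarrow> V X = v2 X) \<and> mso_sat I w v1 V \<psi>)"
proof (induction Xs arbitrary: v2)
  case Nil
  then show ?case by (simp add: mso_exs2_def fun_eq_iff[symmetric])
next
  case (Cons X Xs)
  have "mso_sat I w v1 v2 (mso_exs2 (X # Xs) \<psi>) \<longleftrightarrow>
      (\<exists>S\<subseteq>{..<padlen w}. mso_sat I w v1 (v2(X := S)) (mso_exs2 Xs \<psi>))"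
    by (simp add: mso_exs2_def)
  also have "\<dots> \<longleftrightarrow> (\<exists>V. (\<forall>Y\<in>set (X # Xs). V Y \<subseteq> {..<padlen w}) \<and>
      (\<forall>Y. Y \<notin> set (X # Xs) \<longrightarrow> V Y = v2 Y) \<and> mso_sat I w v1 V \<psi>)"
    unfolding Cons.IH
  proof safe
    fix S V assume S: "S \<subseteq> {..<padlen w}" and V: "\<forall>Y\<in>set Xs. V Y \<subseteq> {..<padlen w}"
      "\<forall>Y. Y \<notin> set Xs \<longrightarrow> V Y = (v2(X := S)) Y" and "mso_sat I w v1 V \<psi>"
    moreover have "V Y \<subseteq> {..<padlen w}" if "Y \<in> set (X # Xs)" for Y
      using that S V by (cases "Y \<in> set Xs") auto
    ultimately show "\<exists>V. (\<forall>Y\<in>set (X # Xs). V Y \<subseteq> {..<padlen w}) \<and>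
        (\<forall>Y. Y \<notin> set (X # Xs) \<longrightarrow> V Y = v2 Y) \<and> mso_sat I w v1 V \<psi>"
      by (intro exI[of _ V]) auto
  next
    fix V assume "\<forall>Y\<in>set (X # Xs). V Y \<subseteq> {..<padlen w}"
      "\<forall>Y. Y \<notin> set (X # Xs) \<longrightarrow> V Y = v2 Y" "mso_sat I w v1 V \<psi>"
    then show "\<exists>S\<subseteq>{..<padlen w}. \<exists>V'. (\<forall>Y\<in>set Xs. V' Y \<subseteq> {..<padlen w}) \<and>
        (\<forall>Y. Y \<notin> set Xs \<longrightarrow> V' Y = (v2(X := S)) Y) \<and> mso_sat I w v1 V' \<psi>"
      by (intro exI[of _ "V X"] conjI exI[of _ V]) auto
  qed
  finally show ?case .
qed

type_synonym 'r edge = "nat \<times> 'r fo \<times> nat"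

text \<open>Predicates \<open>\<alpha>\<^sub>F\<close> need a formula with a free variable; conjoining \<open>x\<^sub>1 = x\<^sub>1\<close>
  supplies one without changing the meaning.\<close>

definition add_var0 :: "'r fo \<Rightarrow> 'r fo" where
  "add_var0 \<phi> = FConj \<phi> (FEq 0 0)"

definition mso_succ01 :: "'r mso" where
  "mso_succ01 = MConj (MLess 0 1) (MNeg (MEx1 2 (MConj (MLess 0 2) (MLess 2 1))))"

definition labelled_everywhere :: "nat \<Rightarrow> 'r mso" where
  "labelled_everywhere K = mso_all1 0 (mso_disjs (map (MMem 0) [0..<K]))"

definition labels_hold :: "'r edge list \<Rightarrow> 'r mso" where
  "labels_hold es = mso_all1 0 (mso_conjs
     (map (\<lambda>k. mso_imp (MMem 0 k) (MAlpha (add_var0 (fst (snd (es ! k)))) 0)) [0..<length es]))"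

definition edges_chain :: "'r edge list \<Rightarrow> 'r mso" where
  "edges_chain es = mso_all1 0 (mso_all1 1 (mso_imp mso_succ01 (mso_conjs
     (map (\<lambda>(k, k'). MNeg (MConj (MMem 0 k) (MMem 1 k')))
       (filter (\<lambda>(k, k'). snd (snd (es ! k)) \<noteq> fst (es ! k')) (List.product [0..<length es] [0..<length es]))))))"

definition starts_initial :: "'r edge list \<Rightarrow> nat set \<Rightarrow> 'r mso" where
  "starts_initial es I0 = mso_all1 0 (mso_imp (MNeg (MEx1 1 (MLess 1 0)))
     (mso_conjs (map (\<lambda>k. MNeg (MMem 0 k)) (filter (\<lambda>k. fst (es ! k) \<notin> I0) [0..<length es]))))"

definition ends_final :: "'r edge list \<Rightarrow> nat set \<Rightarrow> 'r mso" where
  "ends_final es T = mso_all1 0 (mso_imp (MNeg (MEx1 1 (MLess 0 1)))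
     (mso_conjs (map (\<lambda>k. MNeg (MMem 0 k)) (filter (\<lambda>k. snd (snd (es ! k)) \<notin> T) [0..<length es]))))"

definition mso_nonempty :: "'r mso" where
  "mso_nonempty = MEx1 0 (MEq 0 0)"

definition aut_formula :: "'r edge list \<Rightarrow> nat set \<Rightarrow> nat set \<Rightarrow> 'r mso" where
  "aut_formula es I0 T = mso_disj
     (MConj (MNeg mso_nonempty) (if I0 \<inter> T \<noteq> {} then mso_true else mso_false))
     (MConj mso_nonempty (mso_exs2 [0..<length es] (mso_conjs
       [labelled_everywhere (length es), labels_hold es, edges_chain es, starts_initial es I0, ends_final es T])))"

lemma mso_sentence_aut_formula: "mso_sentence (aut_formula es I0 T)"
proof -
  have "mso_fv2 (mso_conjs [labelled_everywhere (length es), labels_hold es, edges_chain es,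
      starts_initial es I0, ends_final es T]) \<subseteq> set [0..<length es]"
    by (auto simp: labelled_everywhere_def labels_hold_def edges_chain_def starts_initial_def ends_final_def mso_succ01_def)
  then show ?thesis
    by (auto simp: mso_sentence_def aut_formula_def mso_nonempty_def labelled_everywhere_def labels_hold_def
        edges_chain_def starts_initial_def ends_final_def mso_succ01_def)
qed

lemma mso_ok_aut_formula:
  assumes "\<forall>e\<in>set es. fo_formula_n L ar n (fst (snd e))" and "n \<ge> 1"
  shows "mso_ok L ar n (aut_formula es I0 T)"
proof -
  have "mso_ok L ar n (MAlpha (add_var0 (fst (snd (es ! k)))) 0)" if "k < length es" for k
    using assms nth_mem[OF that] by (auto simp: add_var0_def fo_formula_n_def)
  then show ?thesis
    by (simp add: aut_formula_def mso_nonempty_def labelled_everywhere_def labels_hold_def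
        edges_chain_def starts_initial_def ends_final_def mso_succ01_def split_beta)
qed

lemma mso_sat_nonempty: "mso_sat I w v1 v2 mso_nonempty \<longleftrightarrow> 0 < padlen w"
  by (auto simp: mso_nonempty_def)

lemma mso_sat_labelled_everywhere:
  "mso_sat I w v1 W (labelled_everywhere K) \<longleftrightarrow> (\<forall>p<padlen w. \<exists>k<K. p \<in> W k)"
  by (auto simp: labelled_everywhere_def atLeast0LessThan)

lemma mso_sat_labels_hold:
  "mso_sat I w v1 W (labels_hold es) \<longleftrightarrow>
     (\<forall>p<padlen w. \<forall>k<length es. p \<in> W k \<longrightarrow> fo_sat I (col w p) (fst (snd (es ! k))))"
  by (auto simp: labels_hold_def add_var0_def)

lemma mso_sat_succ01:
  "v1 1 < padlen w \<Longrightarrow> mso_sat I w v1 W mso_succ01 \<longleftrightarrow> v1 1 = Suc (v1 0)"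
  by (auto simp: mso_succ01_def)

lemma all_consecutive_iff:
  "(\<forall>p<m. \<forall>p'<m. p' = Suc p \<longrightarrow> Q p p') \<longleftrightarrow> (\<forall>p. Suc p < (m :: nat) \<longrightarrow> Q p (Suc p))"
  by (auto dest: Suc_lessD)

lemma mso_sat_edges_chain:
  "mso_sat I w v1 W (edges_chain es) \<longleftrightarrow>
     (\<forall>p k k'. Suc p < padlen w \<longrightarrow> k < length es \<longrightarrow> k' < length es \<longrightarrow> p \<in> W k \<longrightarrow> Suc p \<in> W k' \<longrightarrow>
        snd (snd (es ! k)) = fst (es ! k'))"
proof -
  have "mso_sat I w v1 W (edges_chain es) \<longleftrightarrow>
      (\<forall>p<padlen w. \<forall>p'<padlen w. p' = Suc p \<longrightarrow>
        (\<forall>k<length es. \<forall>k'<length es. snd (snd (es ! k)) \<noteq> fst (es ! k') \<longrightarrow> \<not> (p \<in> W k \<and> p' \<in> W k')))"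
    by (auto simp: edges_chain_def mso_sat_succ01)
  also have "\<dots> \<longleftrightarrow> (\<forall>p. Suc p < padlen w \<longrightarrow>
        (\<forall>k<length es. \<forall>k'<length es. snd (snd (es ! k)) \<noteq> fst (es ! k') \<longrightarrow> \<not> (p \<in> W k \<and> Suc p \<in> W k')))"
    by (rule all_consecutive_iff)
  finally show ?thesis
    by blast
qed

lemma mso_sat_starts_initial:
  "0 < padlen w \<Longrightarrow> mso_sat I w v1 W (starts_initial es I0) \<longleftrightarrow> (\<forall>k<length es. 0 \<in> W k \<longrightarrow> fst (es ! k) \<in> I0)"
  by (auto simp: starts_initial_def)

lemma last_position_iff: "p < (m :: nat) \<Longrightarrow> (\<forall>q<m. \<not> p < q) \<longleftrightarrow> p = m - 1"
proof
  assume "\<forall>q<m. \<not> p < q" and "p < m"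
  then have "\<not> Suc p < m" by blast
  with \<open>p < m\<close> show "p = m - 1" by linarith
qed auto

lemma mso_sat_ends_final:
  "0 < padlen w \<Longrightarrow> mso_sat I w v1 W (ends_final es T) \<longleftrightarrow>
     (\<forall>k<length es. padlen w - 1 \<in> W k \<longrightarrow> snd (snd (es ! k)) \<in> T)"
  by (auto simp: ends_final_def last_position_iff)

text \<open>\<open>W k\<close> is the set of positions at which the run uses the transition \<open>es ! k\<close>.\<close>

definition edge_labelling ::
  "('r \<Rightarrow> 'a list set) \<Rightarrow> 'a list list \<Rightarrow> 'r edge list \<Rightarrow> nat set \<Rightarrow> nat set \<Rightarrow> (nat \<Rightarrow> nat set) \<Rightarrow> bool" where
  "edge_labelling I w es I0 T W \<longleftrightarrow>
     (\<forall>p<padlen w. \<exists>k<length es. p \<in> W k) \<and>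
     (\<forall>p<padlen w. \<forall>k<length es. p \<in> W k \<longrightarrow> fo_sat I (col w p) (fst (snd (es ! k)))) \<and>
     (\<forall>p k k'. Suc p < padlen w \<longrightarrow> k < length es \<longrightarrow> k' < length es \<longrightarrow> p \<in> W k \<longrightarrow> Suc p \<in> W k' \<longrightarrow>
        snd (snd (es ! k)) = fst (es ! k')) \<and>
     (\<forall>k<length es. 0 \<in> W k \<longrightarrow> fst (es ! k) \<in> I0) \<and>
     (\<forall>k<length es. padlen w - 1 \<in> W k \<longrightarrow> snd (snd (es ! k)) \<in> T)"

lemma mso_holds_aut_formula:
  "mso_holds I w (aut_formula es I0 T) \<longleftrightarrow>
     (padlen w = 0 \<and> I0 \<inter> T \<noteq> {}) \<or>
     (0 < padlen w \<and> (\<exists>W. (\<forall>k\<in>{..<length es}. W k \<subseteq> {..<padlen w}) \<and> (\<forall>k\<ge>length es. W k = {}) \<and>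
        edge_labelling I w es I0 T W))"
proof (cases "padlen w = 0")
  case True
  then show ?thesis
    by (simp add: mso_holds_def aut_formula_def mso_sat_nonempty)
next
  case False
  then show ?thesis
    by (simp add: mso_holds_def aut_formula_def mso_sat_nonempty mso_sat_exs2 edge_labelling_def atLeast0LessThan
        mso_sat_labelled_everywhere mso_sat_labels_hold mso_sat_edges_chain mso_sat_starts_initial
        mso_sat_ends_final not_less)
qed

lemma aut_accepts_Nil_iff: "padlen w = 0 \<Longrightarrow> aut_accepts I E I0 T w \<longleftrightarrow> I0 \<inter> T \<noteq> {}"
  unfolding aut_accepts_def by (auto intro: exI[of _ "\<lambda>_. q" for q])

lemma edge_labelling_imp_aut_accepts:
  assumes "set es \<subseteq> E" and "0 < padlen w" and labelling: "edge_labelling I w es I0 T W"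
  shows "aut_accepts I E I0 T w"
proof -
  let ?m = "padlen w"
  obtain kk where kk: "\<And>p. p < ?m \<Longrightarrow> kk p < length es \<and> p \<in> W (kk p)"
    using labelling unfolding edge_labelling_def by metis
  define qs where "qs i = (if i < ?m then fst (es ! kk i) else snd (snd (es ! kk (?m - 1))))" for i
  have "qs 0 \<in> I0" "qs ?m \<in> T"
    using labelling kk[of 0] kk[of "?m - 1"] \<open>0 < ?m\<close> by (auto simp: edge_labelling_def qs_def)
  moreover have "\<exists>\<phi>. (qs i, \<phi>, qs (Suc i)) \<in> E \<and> fo_sat I (col w i) \<phi>" if "i < ?m" for i
  proof -
    have "qs (Suc i) = snd (snd (es ! kk i))"
    proof (cases "Suc i < ?m")
      case True
      then show ?thesis
        using labelling kk[OF that] kk[OF True] by (auto simp: edge_labelling_def qs_def)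
    next
      case False
      with that have "i = ?m - 1"
        by simp
      with False show ?thesis
        by (simp add: qs_def)
    qed
    then have "(qs i, fst (snd (es ! kk i)), qs (Suc i)) = es ! kk i"
      using that by (simp add: qs_def)
    moreover have "es ! kk i \<in> E"
      using kk[OF that] \<open>set es \<subseteq> E\<close> by auto
    moreover have "fo_sat I (col w i) (fst (snd (es ! kk i)))"
      using labelling kk[OF that] that by (auto simp: edge_labelling_def)
    ultimately show ?thesis
      by metis
  qed
  ultimately show ?thesis
    unfolding aut_accepts_def by blast
qed

lemma aut_accepts_imp_edge_labelling:
  assumes "set es = E" and "aut_accepts I E I0 T w"
  shows "\<exists>W. (\<forall>k. W k \<subseteq> {..<padlen w}) \<and> (\<forall>k\<ge>length es. W k = {}) \<and> edge_labelling I w es I0 T W"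
proof -
  let ?m = "padlen w"
  obtain qs where "qs 0 \<in> I0" "qs ?m \<in> T"
    and steps: "\<forall>i<?m. \<exists>\<phi>. (qs i, \<phi>, qs (Suc i)) \<in> E \<and> fo_sat I (col w i) \<phi>"
    using \<open>aut_accepts I E I0 T w\<close> unfolding aut_accepts_def by blast
  have "\<exists>k<length es. fst (es ! k) = qs i \<and> snd (snd (es ! k)) = qs (Suc i) \<and> fo_sat I (col w i) (fst (snd (es ! k)))"
    if "i < ?m" for i
    using steps that \<open>set es = E\<close> by (fastforce simp: in_set_conv_nth)
  then obtain kk where kk: "\<And>i. i < ?m \<Longrightarrow> kk i < length es \<and> fst (es ! kk i) = qs i \<and>
      snd (snd (es ! kk i)) = qs (Suc i) \<and> fo_sat I (col w i) (fst (snd (es ! kk i)))"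
    by metis
  define W where "W k = {i. i < ?m \<and> kk i = k}" for k
  have "edge_labelling I w es I0 T W"
    unfolding edge_labelling_def
  proof (intro conjI allI impI)
    fix p assume "p < ?m"
    then show "\<exists>k<length es. p \<in> W k"
      using kk by (auto simp: W_def)
  next
    fix p k assume "p < ?m" "k < length es" "p \<in> W k"
    then show "fo_sat I (col w p) (fst (snd (es ! k)))"
      using kk by (auto simp: W_def)
  next
    fix p k k' assume "Suc p < ?m" "p \<in> W k" "Suc p \<in> W k'"
    then show "snd (snd (es ! k)) = fst (es ! k')"
      using kk[of p] kk[of "Suc p"] by (auto simp: W_def)
  next
    fix k assume "0 \<in> W k"
    then show "fst (es ! k) \<in> I0"
      using kk[of 0] \<open>qs 0 \<in> I0\<close> by (auto simp: W_def)
  next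
    fix k assume "?m - 1 \<in> W k"
    then have "0 < ?m" "kk (?m - 1) = k"
      by (auto simp: W_def)
    then show "snd (snd (es ! k)) \<in> T"
      using kk[of "?m - 1"] \<open>qs ?m \<in> T\<close> by simp
  qed
  moreover have "\<forall>k\<ge>length es. W k = {}"
    using kk by (fastforce simp: W_def)
  moreover have "\<forall>k. W k \<subseteq> {..<?m}"
    by (auto simp: W_def)
  ultimately show ?thesis
    by blast
qed

theorem mso_sentence_of_automaton:
  fixes I :: "'r \<Rightarrow> 'a list set"
  assumes "n \<ge> 1" and aut: "is_automaton L ar n Q E I0 T"
  shows "\<exists>\<psi>. mso_ok L ar n \<psi> \<and> mso_sentence \<psi> \<and> (\<forall>w. mso_holds I w \<psi> \<longleftrightarrow> aut_accepts I E I0 T w)"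
proof -
  have "finite E"
    using aut by (simp add: is_automaton_def)
  then obtain es where es: "set es = E"
    using finite_list by blast
  have "mso_ok L ar n (aut_formula es I0 T)"
    using \<open>n \<ge> 1\<close> aut es by (intro mso_ok_aut_formula) (auto simp: is_automaton_def)
  moreover have "mso_holds I w (aut_formula es I0 T) \<longleftrightarrow> aut_accepts I E I0 T w" for w
  proof (cases "padlen w = 0")
    case True
    then show ?thesis
      by (simp add: mso_holds_aut_formula aut_accepts_Nil_iff)
  next
    case False
    show ?thesis
    proof
      assume "mso_holds I w (aut_formula es I0 T)"
      then obtain W where "edge_labelling I w es I0 T W"
        using False by (auto simp: mso_holds_aut_formula)
      then show "aut_accepts I E I0 T w"
        using edge_labelling_imp_aut_accepts[of es E w] es False by simp
    next
      assume "aut_accepts I E I0 T w"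
      obtain W where W: "\<forall>k. W k \<subseteq> {..<padlen w}" "\<forall>k\<ge>length es. W k = {}"
        "edge_labelling I w es I0 T W"
        using aut_accepts_imp_edge_labelling[OF es \<open>aut_accepts I E I0 T w\<close>] by blast
      show "mso_holds I w (aut_formula es I0 T)"
        unfolding mso_holds_aut_formula
        by (intro disjI2 conjI exI[of _ W]) (use False W in auto)
    qed
  qed
  ultimately show ?thesis
    using mso_sentence_aut_formula by blast
qed

theorem proposition3p4:
  fixes L :: "'r set" and ar :: "'r \<Rightarrow> nat" and I :: "'r \<Rightarrow> 'a list set"
    and n :: nat and R :: "'a list list set"
  assumes "is_structure L ar I"
    and "n \<ge> 1"
    and "\<forall>w\<in>R. length w = n"
  shows "mso_definable L ar I n R \<longleftrightarrow> recognizable L ar I n R"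
proof
  assume "mso_definable L ar I n R"
  then obtain \<psi> where "mso_ok L ar n \<psi>" "mso_sentence \<psi>"
    and R: "\<forall>w. length w = n \<longrightarrow> (w \<in> R \<longleftrightarrow> mso_holds I w \<psi>)"
    unfolding mso_definable_def by blast
  then obtain Q E I0 T where "is_automaton L ar n Q E I0 T"
    and "\<forall>w. aut_accepts I E I0 T w \<longleftrightarrow> mso_holds I w \<psi>"
    using automaton_of_mso_sentence by blast
  with R assms(3) show "recognizable L ar I n R"
    unfolding recognizable_def by blast
next
  assume "recognizable L ar I n R"
  then obtain Q E I0 T where "is_automaton L ar n Q E I0 T"
    and R: "R = {w. length w = n \<and> aut_accepts I E I0 T w}"
    unfolding recognizable_def by blast
  with \<open>n \<ge> 1\<close> obtain \<psi> where "mso_ok L ar n \<psi>" "mso_sentence \<psi>"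
    and "\<forall>w. mso_holds I w \<psi> \<longleftrightarrow> aut_accepts I E I0 T w"
    using mso_sentence_of_automaton by blast
  with R show "mso_definable L ar I n R"
    unfolding mso_definable_def by blast
qed

end
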